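(* Let $1\le k\le n$ and let $Y$ be a Young diagram of shape $\lambda=(\lambda_1,\ldots,\lambda_k)$ contained in the $k\times(n-k)$ rectangle, justified to the northwest. There is a bijection from the set of Catalan paths of size $(n,k)$ constrained by $Y$ to the set of Catalan tableaux of size $(n,k)$ whose Young diagram is $Y$ (equivalently, of type $\tau$ with $\lambda(\tau)=\lambda$), and this bijection preserves weight: if the Catalan path $C$ maps to the tableau $T$, then $\mathrm{wt}(C)=\mathrm{wt}(T)$.
   Context: Coordinates: label the vertical grid lines of the $k\times(n-k)$ rectangle $0,1,\ldots,n-k$ from left to right; rows are numbered $1,\ldots,k$ from top to bottom; row $i$ of $Y$ consists of the leftmost $\lambda_i$ boxes, $n-k\ge\lambda_1\ge\cdots\ge\lambda_k\ge0$. Let $L$ be the lattice path from the northeast corner to the southwest corner of the rectangle, using south and west unit steps, that follows the southeast border of $Y$. Catalan path: a lattice path from the northeast corner to the southwest corner of the rectangle using unit south and west steps that never crosses the southeast border of $Y$ (i.e. stays weakly inside $Y$ together with its boundary). Equivalently it is described by $(C_1,\ldots,C_k)$ with $C_1\ge\cdots\ge C_k\ge0$ and $C_i\le\lambda_i$, where $C_i$ is the label of the vertical grid line on which the path's south step in row $i$ lies. Edge weights: a south step lying on the west border of the rectangle (i.e. $C_i=0$) has weight $1/\beta$; any other south step has weight $1$; a west step lying on $L$ has weight $1/\alpha$; any other west step has weight $1$. The path weight $\mathrm{pwt}(C)$ is the product of the edge weights and $\mathrm{wt}(C)=(\alpha\beta)^n\,\mathrm{pwt}(C)$. Catalan tableau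 of size $(n,k)$ with Young diagram $Y$: a filling of the boxes of $Y$ with $\alpha$'s and $\beta$'s (at most one per box) such that (i) every box in the same column and above an $\alpha$ is empty; (ii) every box in the same row and left of a $\beta$ is empty; (iii) every box not above an $\alpha$ and not left of a $\beta$ contains an $\alpha$ or a $\beta$. Its type is the word read along $L$ from northeast to southwest ($1$ for south, $0$ for west steps); $\lambda(\tau)_i$ is the number of $0$'s after the $i$-th $1$ of $\tau$. Its weight is $\mathrm{wt}(T)=(\alpha\beta)^n(1/\alpha)^{f_{\mathrm{col}}(T)}(1/\beta)^{f_{\mathrm{row}}(T)}$, where $f_{\mathrm{col}}(T)$ is the number of columns of the rectangle containing no $\alpha$ and $f_{\mathrm{row}}(T)$ the number of rows of the rectangle containing no $\beta$. *)

theory Defs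
  imports Main "HOL.Real"
begin

definition young_shape :: "nat \<Rightarrow> nat \<Rightarrow> (nat \<Rightarrow> nat) \<Rightarrow> bool" where
  "young_shape n k lam \<longleftrightarrow>
     (\<forall>i\<in>{1..k}. lam i \<le> n - k) \<and> (\<forall>i\<in>{1..<k}. lam (Suc i) \<le> lam i)"

definition ext :: "nat \<Rightarrow> nat \<Rightarrow> (nat \<Rightarrow> nat) \<Rightarrow> nat \<Rightarrow> nat" where
  "ext n k f j = (if j = 0 then n - k else if j \<le> k then f j else 0)"

text \<open>Catalan paths, encoded by (C_1,...,C_k); values outside 1..k are fixed to 0.\<close>
definition catalan_paths :: "nat \<Rightarrow> nat \<Rightarrow> (nat \<Rightarrow> nat) \<Rightarrow> (nat \<Rightarrow> nat) set" where
  "catalan_paths n k lam = {C. (\<forall>i\<in>{1..<k}. C (Suc i) \<le> C i) \<and> (\<forall>i\<in>{1..k}. C i \<le> lam i)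
                               \<and> (\<forall>i. i \<notin> {1..k} \<longrightarrow> C i = 0)}"

text \<open>Number of south steps on the west border (C_i = 0).\<close>
definition path_south_border :: "nat \<Rightarrow> (nat \<Rightarrow> nat) \<Rightarrow> nat" where
  "path_south_border k C = card {i\<in>{1..k}. C i = 0}"

text \<open>Number of west steps lying on L.  On the horizontal grid line j (j = 0..k, counted from
  the top), the path has west steps from x to x-1 for ext C (j+1) < x \<le> ext C j, and L has
  horizontal edges from x to x-1 for ext lam (j+1) < x \<le> ext lam j.\<close>
definition path_west_on_L :: "nat \<Rightarrow> nat \<Rightarrow> (nat \<Rightarrow> nat) \<Rightarrow> (nat \<Rightarrow> nat) \<Rightarrow> nat" where
  "path_west_on_L n k lam C = card {(j, x). j \<le> k \<and>
      ext n k C (Suc j) < x \<and> x \<le> ext n k C j \<and>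
      ext n k lam (Suc j) < x \<and> x \<le> ext n k lam j}"

definition path_pwt :: "nat \<Rightarrow> nat \<Rightarrow> (nat \<Rightarrow> nat) \<Rightarrow> real \<Rightarrow> real \<Rightarrow> (nat \<Rightarrow> nat) \<Rightarrow> real" where
  "path_pwt n k lam \<alpha> \<beta> C =
     (1 / \<beta>) ^ path_south_border k C * (1 / \<alpha>) ^ path_west_on_L n k lam C"

definition path_wt :: "nat \<Rightarrow> nat \<Rightarrow> (nat \<Rightarrow> nat) \<Rightarrow> real \<Rightarrow> real \<Rightarrow> (nat \<Rightarrow> nat) \<Rightarrow> real" where
  "path_wt n k lam \<alpha> \<beta> C = (\<alpha> * \<beta>) ^ n * path_pwt n k lam \<alpha> \<beta> C"

text \<open>Fillings: box (i,j) is row i (1..k, top to bottom), column j (1..n-k, left to right).\<close>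
datatype cell = Emp | Alpha | Beta

definition in_Y :: "nat \<Rightarrow> (nat \<Rightarrow> nat) \<Rightarrow> nat \<times> nat \<Rightarrow> bool" where
  "in_Y k lam b \<longleftrightarrow> 1 \<le> fst b \<and> fst b \<le> k \<and> 1 \<le> snd b \<and> snd b \<le> lam (fst b)"

definition catalan_tableaux :: "nat \<Rightarrow> nat \<Rightarrow> (nat \<Rightarrow> nat) \<Rightarrow> (nat \<times> nat \<Rightarrow> cell) set" where
  "catalan_tableaux n k lam = {T.
     (\<forall>b. \<not> in_Y k lam b \<longrightarrow> T b = Emp) \<and>
     \<comment> \<open>(i) boxes in the same column above an alpha are empty\<close>
     (\<forall>i j i'. in_Y k lam (i, j) \<and> T (i, j) = Alpha \<and> in_Y k lam (i', j) \<and> i' < i \<longrightarrow> T (i', j) = Emp) \<and>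
     \<comment> \<open>(ii) boxes in the same row left of a beta are empty\<close>
     (\<forall>i j j'. in_Y k lam (i, j) \<and> T (i, j) = Beta \<and> in_Y k lam (i, j') \<and> j' < j \<longrightarrow> T (i, j') = Emp) \<and>
     \<comment> \<open>(iii) boxes neither above an alpha nor left of a beta are filled\<close>
     (\<forall>i j. in_Y k lam (i, j) \<and>
        \<not> (\<exists>i'. i < i' \<and> in_Y k lam (i', j) \<and> T (i', j) = Alpha) \<and>
        \<not> (\<exists>j'. j < j' \<and> in_Y k lam (i, j') \<and> T (i, j') = Beta) \<longrightarrow> T (i, j) \<noteq> Emp)}"

definition f_col :: "nat \<Rightarrow> nat \<Rightarrow> (nat \<times> nat \<Rightarrow> cell) \<Rightarrow> nat" where
  "f_col n k T = card {j\<in>{1..n-k}. \<not> (\<exists>i\<in>{1..k}. T (i, j) = Alpha)}"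

definition f_row :: "nat \<Rightarrow> nat \<Rightarrow> (nat \<times> nat \<Rightarrow> cell) \<Rightarrow> nat" where
  "f_row n k T = card {i\<in>{1..k}. \<not> (\<exists>j\<in>{1..n-k}. T (i, j) = Beta)}"

definition tab_wt :: "nat \<Rightarrow> nat \<Rightarrow> real \<Rightarrow> real \<Rightarrow> (nat \<times> nat \<Rightarrow> cell) \<Rightarrow> real" where
  "tab_wt n k \<alpha> \<beta> T = (\<alpha> * \<beta>) ^ n * (1 / \<alpha>) ^ f_col n k T * (1 / \<beta>) ^ f_row n k T"

end

theory Submission
  imports Defs "HOL-Library.Disjoint_Sets"
begin

text \<open>
  Paths and tableaux are matched by the same recursion on the longest row.  Let M = lam 1 and
  let rows 1..h be the rows of length M.  A Catalan path runs down the line x = M in its first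
  d \<le> h rows; in a Catalan tableau column M is empty in rows 1..a-1, carries an alpha in row a and
  betas in rows a+1..h (a = 0 if it has no alpha).  With a = h - d for paths, deleting column M
  together with the first d rows of a path, resp. the rows a+1..h of a tableau (which are empty
  left of their beta), leaves a Catalan object for the shape with a rows of length M - 1 followed
  by the rows of lam below h, and both deletions are invertible.  They keep the number of south
  steps on the west border, resp. of beta-free rows, and lower the number of west steps on L,
  resp. of alpha-free columns, by one exactly when a = 0.  Induction on lam 1 thus gives a
  bijection matching both statistics, and these statistics are the exponents of 1/beta and
  1/alpha in the two weights.
\<close>

section \<open>Statistics of paths and tableaux\<close>

definition shape_in :: "nat \<Rightarrow> nat \<Rightarrow> (nat \<Rightarrow> nat) \<Rightarrow> bool" where
  "shape_in k m lam \<longleftrightarrow> (\<forall>i\<in>{1..k}. lam i \<le> m) \<and> (\<forall>i\<in>{1..<k}. lam (Suc i) \<le> lam i)"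

definition col_above_path :: "nat \<Rightarrow> (nat \<Rightarrow> nat) \<Rightarrow> (nat \<Rightarrow> nat) \<Rightarrow> nat \<Rightarrow> bool" where
  "col_above_path k lam C x \<longleftrightarrow> (\<forall>i\<in>{1..k}. x \<le> lam i \<longrightarrow> x \<le> C i)"

definition cols_above_path :: "nat \<Rightarrow> nat \<Rightarrow> (nat \<Rightarrow> nat) \<Rightarrow> (nat \<Rightarrow> nat) \<Rightarrow> nat" where
  "cols_above_path k m lam C = card {x\<in>{1..m}. col_above_path k lam C x}"

definition alpha_free_col :: "nat \<Rightarrow> (nat \<times> nat \<Rightarrow> cell) \<Rightarrow> nat \<Rightarrow> bool" where
  "alpha_free_col k T j \<longleftrightarrow> \<not> (\<exists>i\<in>{1..k}. T (i, j) = Alpha)"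

definition alpha_free_cols :: "nat \<Rightarrow> nat \<Rightarrow> (nat \<times> nat \<Rightarrow> cell) \<Rightarrow> nat" where
  "alpha_free_cols k m T = card {j\<in>{1..m}. alpha_free_col k T j}"

definition beta_free_row :: "nat \<Rightarrow> (nat \<times> nat \<Rightarrow> cell) \<Rightarrow> nat \<Rightarrow> bool" where
  "beta_free_row m T i \<longleftrightarrow> \<not> (\<exists>j\<in>{1..m}. T (i, j) = Beta)"

definition beta_free_rows :: "nat \<Rightarrow> nat \<Rightarrow> (nat \<times> nat \<Rightarrow> cell) \<Rightarrow> nat" where
  "beta_free_rows k m T = card {i\<in>{1..k}. beta_free_row m T i}"

definition count_preserving_bij ::
    "nat \<Rightarrow> nat \<Rightarrow> (nat \<Rightarrow> nat) \<Rightarrow> ((nat \<Rightarrow> nat) \<Rightarrow> nat \<times> nat \<Rightarrow> cell)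
     \<Rightarrow> (nat \<Rightarrow> nat) set \<Rightarrow> (nat \<times> nat \<Rightarrow> cell) set \<Rightarrow> bool" where
  "count_preserving_bij k m lam f A B \<longleftrightarrow> bij_betw f A B \<and>
     (\<forall>C\<in>A. path_south_border k C = beta_free_rows k m (f C) \<and>
            cols_above_path k m lam C = alpha_free_cols k m (f C))"

lemma antitone_rows:
  assumes "\<forall>i\<in>{1..<k}. f (Suc i) \<le> (f i :: nat)" "1 \<le> i" "i \<le> j" "j \<le> k"
  shows "f j \<le> f i"
  using assms(3,4)
proof (induction j rule: dec_induct)
  case (step j)
  then have "f (Suc j) \<le> f j" using assms(1,2) by simp
  then show ?case using step by simp
qed simp

lemma down_closed_eq_interval:
  assumes "S \<subseteq> {1..h}" "\<forall>i\<in>S. \<forall>j. 1 \<le> j \<longrightarrow> j \<le> i \<longrightarrow> j \<in> S"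
  shows "S = {1..card S}"
proof (cases "S = {}")
  case False
  define t where "t = Max S"
  have "finite S" using assms(1) finite_subset by blast
  then have "t \<in> S" "\<forall>i\<in>S. i \<le> t" using False by (auto simp: t_def)
  then have "S = {1..t}" using assms by (intro equalityI subsetI) auto
  then show ?thesis by simp
qed simp

lemma bij_betw_fiberwise:
  assumes "\<forall>x\<in>A. ia x \<in> I" "\<forall>y\<in>B. ib y \<in> I"
    and "\<forall>i\<in>I. bij_betw (g i) {x\<in>A. ia x = i} {y\<in>B. ib y = i}"
  shows "bij_betw (\<lambda>x. g (ia x) x) A B"
proof -
  have "bij_betw (\<lambda>x. g (ia x) x) (\<Union>i\<in>I. {x\<in>A. ia x = i}) (\<Union>i\<in>I. {y\<in>B. ib y = i})"
  proof (rule bij_betw_UNION_disjoint)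
    show "disjoint_family_on (\<lambda>i. {y\<in>B. ib y = i}) I"
      by (auto simp: disjoint_family_on_def)
    show "bij_betw (\<lambda>x. g (ia x) x) {x\<in>A. ia x = i} {y\<in>B. ib y = i}" if "i \<in> I" for i
    proof -
      have "bij_betw (g i) {x\<in>A. ia x = i} {y\<in>B. ib y = i}" using assms(3) that by blast
      then show ?thesis by (rule bij_betw_cong[THEN iffD1, rotated]) simp
    qed
  qed
  moreover have "(\<Union>i\<in>I. {x\<in>A. ia x = i}) = A" "(\<Union>i\<in>I. {y\<in>B. ib y = i}) = B"
    using assms(1,2) by auto
  ultimately show ?thesis by simp
qed

text \<open>Column x > M of the first count corresponds to column x - 1 of the second; only column M
  is lost.\<close>
lemma card_cols_delete:
  fixes P P' :: "nat \<Rightarrow> bool"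
  assumes "1 \<le> M" "M \<le> m" "\<And>x. M < x \<Longrightarrow> P x" "\<And>x. M \<le> x \<Longrightarrow> P' x"
    and "\<And>x. x < M \<Longrightarrow> P x \<longleftrightarrow> P' x"
  shows "card {x\<in>{1..m}. P x} = card {x\<in>{1..m - 1}. P' x} + (if P M then 1 else 0)"
proof -
  define L where "L = {x\<in>{1..<M}. P' x}"
  have "{x\<in>{1..m}. P x} = (L \<union> (if P M then {M} else {})) \<union> {M<..m}"
  proof (intro equalityI subsetI)
    fix x assume "x \<in> {x\<in>{1..m}. P x}"
    then show "x \<in> (L \<union> (if P M then {M} else {})) \<union> {M<..m}"
      using assms by (cases x M rule: linorder_cases) (auto simp: L_def)
  qed (use assms in \<open>auto simp: L_def split: if_splits\<close>)
  then have "card {x\<in>{1..m}. P x} = card ((L \<union> (if P M then {M} else {})) \<union> {M<..m})"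
    by (rule arg_cong)
  also have "\<dots> = card (L \<union> (if P M then {M} else {})) + card {M<..m}"
    by (rule card_Un_disjoint) (auto simp: L_def)
  also have "card (L \<union> (if P M then {M} else {})) = card L + card (if P M then {M} else {})"
    by (rule card_Un_disjoint) (auto simp: L_def)
  finally have W: "card {x\<in>{1..m}. P x} = card L + (if P M then 1 else 0) + (m - M)" by simp
  have "{x\<in>{1..m - 1}. P' x} = L \<union> {M..m - 1}" using assms by (auto simp: L_def)
  then have "card {x\<in>{1..m - 1}. P' x} = card (L \<union> {M..m - 1})" by (rule arg_cong)
  also have "\<dots> = card L + card {M..m - 1}" by (rule card_Un_disjoint) (auto simp: L_def)
  finally have W': "card {x\<in>{1..m - 1}. P' x} = card L + (m - M)" using assms(1,2) by simp
  show ?thesis using W W' by simp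
qed

lemma antimono_crossing_unique:
  fixes g :: "nat \<Rightarrow> nat"
  assumes "antimono g" "g (Suc j) < x" "x \<le> g j" "g (Suc j') < x" "x \<le> g j'"
  shows "j = j'"
proof (rule ccontr)
  assume "j \<noteq> j'"
  then consider "Suc j \<le> j'" | "Suc j' \<le> j" by linarith
  then show False
  proof cases
    case 1
    then have "g j' \<le> g (Suc j)" using antimonoD[OF assms(1)] by blast
    then show False using assms(2,5) by simp
  next
    case 2
    then have "g j \<le> g (Suc j')" using antimonoD[OF assms(1)] by blast
    then show False using assms(3,4) by simp
  qed
qed

lemma crossing_exists:
  fixes g :: "nat \<Rightarrow> nat"
  assumes "x \<le> g 0" "g (Suc k) < x"
  shows "\<exists>j\<le>k. g (Suc j) < x \<and> x \<le> g j"
  using assms(2)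
proof (induction k)
  case (Suc k)
  show ?case
  proof (cases "x \<le> g (Suc k)")
    case False
    then show ?thesis using Suc.IH by (meson le_Suc_eq not_le)
  qed (use Suc.prems in auto)
qed (use assms(1) in auto)

section \<open>West steps on the border of Y\<close>

lemma catalan_paths_dec: "C \<in> catalan_paths n k lam \<Longrightarrow> i \<in> {1..<k} \<Longrightarrow> C (Suc i) \<le> C i"
  and catalan_paths_le: "C \<in> catalan_paths n k lam \<Longrightarrow> i \<in> {1..k} \<Longrightarrow> C i \<le> lam i"
  and catalan_paths_outside: "C \<in> catalan_paths n k lam \<Longrightarrow> i \<notin> {1..k} \<Longrightarrow> C i = 0"
  unfolding catalan_paths_def by auto

lemma antimono_ext:
  assumes "shape_in k (n - k) lam"
  shows "antimono (ext n k lam)"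
proof
  fix j j' :: nat assume "j \<le> j'"
  then show "ext n k lam j' \<le> ext n k lam j"
    using assms antitone_rows[of k lam j j'] by (auto simp: shape_in_def ext_def)
qed

lemma west_step_on_L_iff:
  assumes Y: "shape_in k (n - k) lam" and C: "C \<in> catalan_paths n k lam"
    and j: "j \<le> k" "ext n k lam (Suc j) < x" "x \<le> ext n k lam j"
  shows "ext n k C (Suc j) < x \<and> x \<le> ext n k C j \<longleftrightarrow> col_above_path k lam C x"
proof
  assume step: "ext n k C (Suc j) < x \<and> x \<le> ext n k C j"
  have "x \<le> C i" if i: "i \<in> {1..k}" "x \<le> lam i" for i
  proof -
    have "i \<le> j"
    proof (rule ccontr)
      assume "\<not> i \<le> j"
      then have "ext n k lam i \<le> ext n k lam (Suc j)"
        using antimonoD[OF antimono_ext[OF Y], of "Suc j" i] by simp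
      then show False using i j by (simp add: ext_def)
    qed
    then have "x \<le> C j" using i j step by (simp add: ext_def)
    also have "C j \<le> C i" using antitone_rows[of k C i j] catalan_paths_dec[OF C] \<open>i \<le> j\<close> j(1) i
      by auto
    finally show ?thesis .
  qed
  then show "col_above_path k lam C x" by (simp add: col_above_path_def)
next
  assume "col_above_path k lam C x"
  then have "x \<le> ext n k C j" using j by (cases "j = 0") (auto simp: ext_def col_above_path_def)
  moreover have "ext n k C (Suc j) \<le> ext n k lam (Suc j)"
    using catalan_paths_le[OF C] by (auto simp: ext_def)
  ultimately show "ext n k C (Suc j) < x \<and> x \<le> ext n k C j" using j(2) by simp
qed

text \<open>Each column x of the rectangle lies in exactly one window ext lam (j + 1) < x \<le> ext lam j
  of L, and the west step of the path in column x lies on L iff it lies on the line j.\<close>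
lemma path_west_on_L_eq_cols_above_path:
  assumes Y: "shape_in k (n - k) lam" and C: "C \<in> catalan_paths n k lam"
  shows "path_west_on_L n k lam C = cols_above_path k (n - k) lam C"
proof -
  let ?P = "{(j, x). j \<le> k \<and> ext n k lam (Suc j) < x \<and> x \<le> ext n k lam j \<and>
    col_above_path k lam C x}"
  let ?W = "{x\<in>{1..n - k}. col_above_path k lam C x}"
  have anti: "antimono (ext n k lam)" by (rule antimono_ext[OF Y])
  have "path_west_on_L n k lam C = card ?P"
    unfolding path_west_on_L_def using west_step_on_L_iff[OF Y C]
    by (intro arg_cong[where f = card]) auto
  also have "\<dots> = card (snd ` ?P)"
  proof (rule card_image[symmetric], rule inj_onI)
    fix p q assume p: "p \<in> ?P" and q: "q \<in> ?P" and pq: "snd p = snd q"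
    have "fst p = fst q"
      by (rule antimono_crossing_unique[OF anti, of "fst p" "snd p" "fst q"]) (use p q pq in auto)
    then show "p = q" using pq by (simp add: prod_eq_iff)
  qed
  also have "snd ` ?P = ?W"
  proof (intro equalityI subsetI)
    fix x assume "x \<in> snd ` ?P"
    then obtain j where "j \<le> k" "ext n k lam (Suc j) < x" "x \<le> ext n k lam j"
      "col_above_path k lam C x" by auto
    moreover have "ext n k lam j \<le> n - k" using antimonoD[OF anti, of 0 j] by (simp add: ext_def)
    ultimately show "x \<in> ?W" by auto
  next
    fix x assume x: "x \<in> ?W"
    then have "ext n k lam (Suc k) < x" "x \<le> ext n k lam 0" by (auto simp: ext_def)
    then obtain j where "j \<le> k" "ext n k lam (Suc j) < x" "x \<le> ext n k lam j"
      using crossing_exists by blast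
    then show "x \<in> snd ` ?P" using x by force
  qed
  finally show ?thesis by (simp add: cols_above_path_def)
qed

lemma in_Y_iff: "in_Y k lam (i, j) \<longleftrightarrow> 1 \<le> i \<and> i \<le> k \<and> 1 \<le> j \<and> j \<le> lam i"
  by (simp add: in_Y_def)

lemma tableau_outside: "T \<in> catalan_tableaux n k lam \<Longrightarrow> \<not> in_Y k lam b \<Longrightarrow> T b = Emp"
  and tableau_col: "T \<in> catalan_tableaux n k lam \<Longrightarrow> in_Y k lam (i, j) \<Longrightarrow> T (i, j) = Alpha \<Longrightarrow>
    in_Y k lam (i', j) \<Longrightarrow> i' < i \<Longrightarrow> T (i', j) = Emp"
  and tableau_row: "T \<in> catalan_tableaux n k lam \<Longrightarrow> in_Y k lam (i, j) \<Longrightarrow> T (i, j) = Beta \<Longrightarrow>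
    in_Y k lam (i, j') \<Longrightarrow> j' < j \<Longrightarrow> T (i, j') = Emp"
  and tableau_fill: "T \<in> catalan_tableaux n k lam \<Longrightarrow> in_Y k lam (i, j) \<Longrightarrow>
    (\<And>i'. i < i' \<Longrightarrow> in_Y k lam (i', j) \<Longrightarrow> T (i', j) \<noteq> Alpha) \<Longrightarrow>
    (\<And>j'. j < j' \<Longrightarrow> in_Y k lam (i, j') \<Longrightarrow> T (i, j') \<noteq> Beta) \<Longrightarrow> T (i, j) \<noteq> Emp"
  unfolding catalan_tableaux_def by blast+

lemma catalan_tableauxI:
  assumes "\<And>b. \<not> in_Y k lam b \<Longrightarrow> T b = Emp"
    and "\<And>i j i'. in_Y k lam (i, j) \<Longrightarrow> T (i, j) = Alpha \<Longrightarrow> in_Y k lam (i', j) \<Longrightarrow> i' < i \<Longrightarrow>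
      T (i', j) = Emp"
    and "\<And>i j j'. in_Y k lam (i, j) \<Longrightarrow> T (i, j) = Beta \<Longrightarrow> in_Y k lam (i, j') \<Longrightarrow> j' < j \<Longrightarrow>
      T (i, j') = Emp"
    and "\<And>i j. in_Y k lam (i, j) \<Longrightarrow>
      (\<And>i'. i < i' \<Longrightarrow> in_Y k lam (i', j) \<Longrightarrow> T (i', j) \<noteq> Alpha) \<Longrightarrow>
      (\<And>j'. j < j' \<Longrightarrow> in_Y k lam (i, j') \<Longrightarrow> T (i, j') \<noteq> Beta) \<Longrightarrow> T (i, j) \<noteq> Emp"
  shows "T \<in> catalan_tableaux n k lam"
  unfolding catalan_tableaux_def using assms by blast

lemma cell_cases: "c \<noteq> Emp \<Longrightarrow> c \<noteq> Beta \<Longrightarrow> c = Alpha"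
  by (cases c) auto

section \<open>Deleting the last column\<close>

text \<open>Here d is the number of rows deleted from a path and a = h - d; path_cut recovers a from
  a path and tab_cut from a tableau.  The rows of the smaller tableau are renumbered into the
  kept rows 1..a and h+1.. by row_skip.\<close>

definition shrink_shape :: "nat \<Rightarrow> nat \<Rightarrow> nat \<Rightarrow> (nat \<Rightarrow> nat) \<Rightarrow> nat \<Rightarrow> nat" where
  "shrink_shape M a d lam i = (if i \<le> a then M - 1 else lam (i + d))"

definition path_cut :: "nat \<Rightarrow> nat \<Rightarrow> (nat \<Rightarrow> nat) \<Rightarrow> nat" where
  "path_cut h M C = h - card {i\<in>{1..h}. C i = M}"

definition path_drop :: "nat \<Rightarrow> nat \<Rightarrow> (nat \<Rightarrow> nat) \<Rightarrow> nat \<Rightarrow> nat" where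
  "path_drop k d C i = (if 1 \<le> i \<and> i \<le> k - d then C (i + d) else 0)"

definition path_lift :: "nat \<Rightarrow> nat \<Rightarrow> nat \<Rightarrow> (nat \<Rightarrow> nat) \<Rightarrow> nat \<Rightarrow> nat" where
  "path_lift k M d C' i = (if 1 \<le> i \<and> i \<le> k then (if i \<le> d then M else C' (i - d)) else 0)"

definition tab_cut :: "nat \<Rightarrow> nat \<Rightarrow> (nat \<times> nat \<Rightarrow> cell) \<Rightarrow> nat" where
  "tab_cut h M T = card {i\<in>{1..h}. T (i, M) \<noteq> Beta}"

definition row_skip :: "nat \<Rightarrow> nat \<Rightarrow> nat \<Rightarrow> nat" where
  "row_skip a d i = (if i \<le> a then i else i + d)"

definition row_unskip :: "nat \<Rightarrow> nat \<Rightarrow> nat \<Rightarrow> nat" where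
  "row_unskip a d i = (if i \<le> a then i else i - d)"

fun tab_drop :: "nat \<Rightarrow> nat \<Rightarrow> nat \<Rightarrow> (nat \<times> nat \<Rightarrow> cell) \<Rightarrow> nat \<times> nat \<Rightarrow> cell" where
  "tab_drop M a d T (i, j) = (if M \<le> j then Emp else T (row_skip a d i, j))"

fun tab_lift ::
    "nat \<Rightarrow> (nat \<Rightarrow> nat) \<Rightarrow> nat \<Rightarrow> nat \<Rightarrow> nat \<Rightarrow> nat \<Rightarrow> (nat \<times> nat \<Rightarrow> cell) \<Rightarrow> nat \<times> nat \<Rightarrow> cell"
  where
  "tab_lift k lam M h a d T' (i, j) = (if in_Y k lam (i, j) then
      (if j = M then (if i < a then Emp else if i = a then Alpha else Beta)
       else if a < i \<and> i \<le> h then Emp else T' (row_unskip a d i, j)) else Emp)"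

declare tab_drop.simps [simp del] tab_lift.simps [simp del]

lemma row_skip_less_iff: "row_skip a d i < row_skip a d i' \<longleftrightarrow> i < i'"
  by (auto simp: row_skip_def)

locale top_block =
  fixes k m M h :: nat and lam :: "nat \<Rightarrow> nat"
  assumes rows_dec: "\<forall>i\<in>{1..<k}. lam (Suc i) \<le> lam i"
    and M_pos: "1 \<le> M" and M_le: "M \<le> m" and h_le: "h \<le> k"
    and top_rows: "\<forall>i\<in>{1..h}. lam i = M"
    and lower_rows: "\<forall>i. h < i \<and> i \<le> k \<longrightarrow> lam i < M"
begin

lemma lam_le_M: "i \<in> {1..k} \<Longrightarrow> lam i \<le> M"
  using top_rows lower_rows[rule_format, of i] by (cases "i \<le> h") auto

lemma path_cut_rows:
  assumes C: "C \<in> catalan_paths n k lam"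
  shows "{i\<in>{1..h}. C i = M} = {1..h - path_cut h M C}" "path_cut h M C \<le> h"
proof -
  let ?S = "{i\<in>{1..h}. C i = M}"
  have closed: "\<forall>i\<in>?S. \<forall>j. 1 \<le> j \<longrightarrow> j \<le> i \<longrightarrow> j \<in> ?S"
  proof (intro ballI allI impI)
    fix i j assume i: "i \<in> ?S" and j: "1 \<le> j" "j \<le> i"
    have "C i \<le> C j" using antitone_rows[of k C j i] catalan_paths_dec[OF C] i j h_le by auto
    moreover have "C j \<le> M" using catalan_paths_le[OF C, of j] top_rows i j h_le by auto
    ultimately show "j \<in> ?S" using i j by auto
  qed
  have "?S = {1..card ?S}" by (rule down_closed_eq_interval[OF _ closed, of h]) blast
  moreover have "card ?S \<le> card {1..h}" by (rule card_mono) auto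
  ultimately show "?S = {1..h - path_cut h M C}" "path_cut h M C \<le> h"
    by (simp_all add: path_cut_def)
qed

lemma in_Y_le_M: "in_Y k lam (i, j) \<Longrightarrow> j \<le> M"
  using lam_le_M[of i] by (auto simp: in_Y_iff)

lemma in_Y_last_col: "in_Y k lam (i, M) \<longleftrightarrow> 1 \<le> i \<and> i \<le> h"
proof
  assume a: "in_Y k lam (i, M)"
  show "1 \<le> i \<and> i \<le> h"
  proof (rule ccontr)
    assume "\<not> (1 \<le> i \<and> i \<le> h)"
    then have "lam i < M" using a lower_rows by (auto simp: in_Y_iff)
    then show False using a by (auto simp: in_Y_iff)
  qed
next
  assume "1 \<le> i \<and> i \<le> h"
  then show "in_Y k lam (i, M)" using top_rows h_le M_pos by (auto simp: in_Y_iff)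
qed

text \<open>An alpha below row i of the last column would empty the cell (j, M), and nothing lies right
  of column M, so a non-beta cell (i, M) would have to hold an alpha itself.\<close>
lemma last_col_beta_below:
  assumes T: "T \<in> catalan_tableaux n k lam" and beta: "T (j, M) = Beta"
    and ij: "j \<le> i" "i \<le> h" and j: "1 \<le> j"
  shows "T (i, M) = Beta"
proof (rule ccontr)
  assume not_beta: "T (i, M) \<noteq> Beta"
  then have less: "j < i" using beta ij le_neq_implies_less by blast
  have Y: "in_Y k lam (i, M)" "in_Y k lam (j, M)" using ij j in_Y_last_col by auto
  have no_alpha: "T (i', M) \<noteq> Alpha" if "i \<le> i'" "in_Y k lam (i', M)" for i'
  proof
    assume "T (i', M) = Alpha"
    then have "T (j, M) = Emp" using tableau_col[OF T that(2) _ Y(2)] less that by auto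
    then show False using beta by simp
  qed
  have "T (i, M) \<noteq> Emp"
  proof (rule tableau_fill[OF T Y(1)])
    show "T (i', M) \<noteq> Alpha" if "i < i'" "in_Y k lam (i', M)" for i'
      using no_alpha that by simp
    show "T (i, j') \<noteq> Beta" if "M < j'" "in_Y k lam (i, j')" for j'
      using in_Y_le_M that by fastforce
  qed
  then show False using no_alpha[of i] Y not_beta by (auto intro: cell_cases)
qed

lemma tab_cut_rows:
  assumes T: "T \<in> catalan_tableaux n k lam"
  shows "{i\<in>{1..h}. T (i, M) \<noteq> Beta} = {1..tab_cut h M T}" "tab_cut h M T \<le> h"
proof -
  let ?S = "{i\<in>{1..h}. T (i, M) \<noteq> Beta}"
  have closed: "\<forall>i\<in>?S. \<forall>j. 1 \<le> j \<longrightarrow> j \<le> i \<longrightarrow> j \<in> ?S"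
    using last_col_beta_below[OF T] by fastforce
  have "?S = {1..card ?S}" by (rule down_closed_eq_interval[OF _ closed, of h]) blast
  moreover have "card ?S \<le> card {1..h}" by (rule card_mono) auto
  ultimately show "?S = {1..tab_cut h M T}" "tab_cut h M T \<le> h" by (simp_all add: tab_cut_def)
qed

end

locale top_block_split = top_block +
  fixes a d :: nat
  assumes split: "a + d = h"
begin

abbreviation lam' :: "nat \<Rightarrow> nat" where
  "lam' \<equiv> shrink_shape M a d lam"

lemma shrink_shape_less:
  assumes "i \<in> {1..k - d}"
  shows "lam' i < M"
proof (cases "i \<le> a")
  case False
  then have "lam (i + d) < M" using lower_rows split assms by auto
  then show ?thesis using False by (simp add: shrink_shape_def)
qed (use M_pos in \<open>simp add: shrink_shape_def\<close>)

lemma shape_in_shrink: "shape_in (k - d) (m - 1) lam'"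
  unfolding shape_in_def
proof
  show "\<forall>i\<in>{1..k - d}. lam' i \<le> m - 1"
    using shrink_shape_less M_le by fastforce
  show "\<forall>i\<in>{1..<k - d}. lam' (Suc i) \<le> lam' i"
  proof
    fix i assume i: "i \<in> {1..<k - d}"
    consider "Suc i \<le> a" | "i = a" | "a < i" by linarith
    then show "lam' (Suc i) \<le> lam' i"
    proof cases
      case 2
      have "lam (Suc i + d) < M" using lower_rows 2 i split by auto
      then show ?thesis using 2 by (simp add: shrink_shape_def)
    next
      case 3
      then show ?thesis using rows_dec[rule_format, of "i + d"] i by (auto simp: shrink_shape_def)
    qed (simp add: shrink_shape_def)
  qed
qed

lemma shrink_shape_le_lam: "i \<in> {1..k - d} \<Longrightarrow> lam' i \<le> lam (i + d)"
  using top_rows split by (auto simp: shrink_shape_def)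

lemma path_drop_in:
  assumes C: "C \<in> catalan_paths n k lam" and cut: "path_cut h M C = a"
  shows "path_drop k d C \<in> catalan_paths n (k - d) lam'"
proof -
  have on_M: "{i\<in>{1..h}. C i = M} = {1..d}" using path_cut_rows(1)[OF C] cut split[symmetric] by simp
  have "C (i + d) \<le> lam' i" if i: "i \<in> {1..k - d}" for i
  proof (cases "i \<le> a")
    case True
    then have "i + d \<in> {1..h}" "i + d \<notin> {1..d}" using i split by auto
    then have "C (i + d) \<noteq> M" using on_M by blast
    moreover have "C (i + d) \<le> M"
      using catalan_paths_le[OF C, of "i + d"] top_rows \<open>i + d \<in> {1..h}\<close> h_le by auto
    ultimately show ?thesis using True by (simp add: shrink_shape_def)
  next
    case False
    then show ?thesis using catalan_paths_le[OF C, of "i + d"] i by (simp add: shrink_shape_def)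
  qed
  moreover have "C (Suc i + d) \<le> C (i + d)" if "i \<in> {1..<k - d}" for i
    using catalan_paths_dec[OF C, of "i + d"] that by (simp add: less_diff_conv)
  ultimately show ?thesis by (auto simp: catalan_paths_def path_drop_def)
qed

lemma shrunk_path_less:
  "C' \<in> catalan_paths n (k - d) lam' \<Longrightarrow> i \<in> {1..k - d} \<Longrightarrow> C' i < M"
  using catalan_paths_le shrink_shape_less le_less_trans by blast

lemma path_lift_in:
  assumes C': "C' \<in> catalan_paths n (k - d) lam'"
  shows "path_lift k M d C' \<in> catalan_paths n k lam"
proof -
  let ?C = "path_lift k M d C'"
  note C'_less = shrunk_path_less[OF C']
  have "?C (Suc i) \<le> ?C i" if i: "i \<in> {1..<k}" for i
  proof -
    consider "Suc i \<le> d" | "i = d" | "d < i" by linarith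
    then show ?thesis
    proof cases
      case 2
      then show ?thesis using C'_less[of 1] catalan_paths_outside[OF C', of 1] i
        by (cases "1 \<le> k - d") (auto simp: path_lift_def)
    next
      case 3
      then have "i - d \<in> {1..<k - d}" using i by auto
      then have "C' (Suc (i - d)) \<le> C' (i - d)" by (rule catalan_paths_dec[OF C'])
      then show ?thesis using 3 i by (simp add: path_lift_def Suc_diff_le)
    qed (use i in \<open>simp add: path_lift_def\<close>)
  qed
  moreover have "?C i \<le> lam i" if i: "i \<in> {1..k}" for i
  proof (cases "i \<le> d")
    case True
    then show ?thesis using i top_rows split by (auto simp: path_lift_def)
  next
    case False
    then have "i - d \<in> {1..k - d}" using i by auto
    then show ?thesis
      using catalan_paths_le[OF C'] shrink_shape_le_lam False i
      by (fastforce simp: path_lift_def intro: le_trans)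
  qed
  ultimately show ?thesis by (auto simp: catalan_paths_def path_lift_def)
qed

lemma path_cut_lift:
  assumes C': "C' \<in> catalan_paths n (k - d) lam'"
  shows "path_cut h M (path_lift k M d C') = a"
proof -
  have "{i\<in>{1..h}. path_lift k M d C' i = M} = {1..d}"
  proof (intro equalityI subsetI)
    fix i assume i: "i \<in> {i\<in>{1..h}. path_lift k M d C' i = M}"
    show "i \<in> {1..d}"
    proof (rule ccontr)
      assume "i \<notin> {1..d}"
      then have "i - d \<in> {1..k - d}" "path_lift k M d C' i = C' (i - d)"
        using i split h_le by (auto simp: path_lift_def)
      then show False using shrunk_path_less[OF C'] i by fastforce
    qed
  qed (use split h_le in \<open>auto simp: path_lift_def\<close>)
  then show ?thesis using split by (simp add: path_cut_def)
qed

lemma path_drop_lift: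
  assumes "C' \<in> catalan_paths n (k - d) lam'"
  shows "path_drop k d (path_lift k M d C') = C'"
proof
  fix i
  show "path_drop k d (path_lift k M d C') i = C' i"
    using catalan_paths_outside[OF assms, of i] by (auto simp: path_drop_def path_lift_def)
qed

lemma path_lift_drop:
  assumes C: "C \<in> catalan_paths n k lam" and cut: "path_cut h M C = a"
  shows "path_lift k M d (path_drop k d C) = C"
proof
  fix i
  have on_M: "{i\<in>{1..h}. C i = M} = {1..d}" using path_cut_rows(1)[OF C] cut split[symmetric] by simp
  show "path_lift k M d (path_drop k d C) i = C i"
  proof (cases "1 \<le> i \<and> i \<le> d")
    case True
    then have "i \<in> {i\<in>{1..h}. C i = M}" using on_M split by simp
    then show ?thesis using True split h_le by (simp add: path_lift_def)
  qed (use catalan_paths_outside[OF C, of i] in \<open>auto simp: path_lift_def path_drop_def\<close>)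
qed

lemma bij_betw_path_drop:
  "bij_betw (path_drop k d) {C\<in>catalan_paths n k lam. path_cut h M C = a}
     (catalan_paths n (k - d) lam')"
  by (rule bij_betw_byWitness[where f' = "path_lift k M d"])
    (use path_lift_drop path_drop_lift path_drop_in path_lift_in path_cut_lift in auto)

lemma south_border_path_lift:
  assumes "C' \<in> catalan_paths n (k - d) lam'"
  shows "path_south_border k (path_lift k M d C') = path_south_border (k - d) C'"
proof -
  have "{i\<in>{1..k}. path_lift k M d C' i = 0} = (\<lambda>i. i + d) ` {i\<in>{1..k - d}. C' i = 0}"
  proof (intro equalityI subsetI)
    fix i assume i: "i \<in> {i\<in>{1..k}. path_lift k M d C' i = 0}"
    then have "\<not> i \<le> d" using M_pos by (auto simp: path_lift_def)
    then have "i - d \<in> {i\<in>{1..k - d}. C' i = 0}" "i = i - d + d"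
      using i by (auto simp: path_lift_def)
    then show "i \<in> (\<lambda>i. i + d) ` {i\<in>{1..k - d}. C' i = 0}" by blast
  qed (auto simp: path_lift_def)
  then show ?thesis unfolding path_south_border_def by (simp add: card_image)
qed

lemma col_above_path_lift_iff:
  assumes x: "x < M"
  shows "col_above_path k lam (path_lift k M d C') x \<longleftrightarrow> col_above_path (k - d) lam' C' x"
proof -
  have row: "(x \<le> lam (i + d) \<longrightarrow> x \<le> path_lift k M d C' (i + d)) \<longleftrightarrow> (x \<le> lam' i \<longrightarrow> x \<le> C' i)"
    if "i \<in> {1..k - d}" for i
    using that x top_rows split by (auto simp: path_lift_def shrink_shape_def)
  show ?thesis
    unfolding col_above_path_def
  proof
    assume A: "\<forall>i\<in>{1..k}. x \<le> lam i \<longrightarrow> x \<le> path_lift k M d C' i"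
    show "\<forall>i\<in>{1..k - d}. x \<le> lam' i \<longrightarrow> x \<le> C' i"
    proof
      fix i assume i: "i \<in> {1..k - d}"
      then have "i + d \<in> {1..k}" by auto
      then show "x \<le> lam' i \<longrightarrow> x \<le> C' i" using A row[OF i] by blast
    qed
  next
    assume A: "\<forall>i\<in>{1..k - d}. x \<le> lam' i \<longrightarrow> x \<le> C' i"
    show "\<forall>i\<in>{1..k}. x \<le> lam i \<longrightarrow> x \<le> path_lift k M d C' i"
    proof
      fix i assume i: "i \<in> {1..k}"
      show "x \<le> lam i \<longrightarrow> x \<le> path_lift k M d C' i"
      proof (cases "i \<le> d")
        case False
        then have "i - d \<in> {1..k - d}" using i by auto
        then show ?thesis using A row[of "i - d"] False by simp
      qed (use i x in \<open>simp add: path_lift_def\<close>)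
    qed
  qed
qed

lemma col_above_path_lift_last:
  assumes C': "C' \<in> catalan_paths n (k - d) lam'"
  shows "col_above_path k lam (path_lift k M d C') M \<longleftrightarrow> a = 0"
proof
  assume M_above: "col_above_path k lam (path_lift k M d C') M"
  show "a = 0"
  proof (rule ccontr)
    assume "a \<noteq> 0"
    then have h: "h \<in> {1..k}" "\<not> h \<le> d" "h - d = a" "a \<in> {1..k - d}" using split h_le by auto
    then have "path_lift k M d C' h < M"
      using catalan_paths_le[OF C', of a] shrink_shape_less[of a] by (simp add: path_lift_def)
    moreover have "M \<le> path_lift k M d C' h"
      using M_above h(1) top_rows by (auto simp: col_above_path_def)
    ultimately show False by simp
  qed
next
  assume "a = 0"
  then have "M \<le> path_lift k M d C' i" if "i \<in> {1..k}" "M \<le> lam i" for i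
    using that lower_rows[rule_format, of i] split by (auto simp: path_lift_def not_le)
  then show "col_above_path k lam (path_lift k M d C') M" by (simp add: col_above_path_def)
qed

lemma cols_above_path_lift:
  assumes C': "C' \<in> catalan_paths n (k - d) lam'"
  shows "cols_above_path k m lam (path_lift k M d C')
    = cols_above_path (k - d) (m - 1) lam' C' + (if a = 0 then 1 else 0)"
proof -
  have above: "col_above_path k lam (path_lift k M d C') x" if "M < x" for x
    using lam_le_M that by (fastforce simp: col_above_path_def)
  have above': "col_above_path (k - d) lam' C' x" if "M \<le> x" for x
    using shrink_shape_less that by (fastforce simp: col_above_path_def)
  have "card {x\<in>{1..m}. col_above_path k lam (path_lift k M d C') x}
      = card {x\<in>{1..m - 1}. col_above_path (k - d) lam' C' x}
        + (if col_above_path k lam (path_lift k M d C') M then 1 else 0)"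
    by (rule card_cols_delete[OF M_pos M_le above above' col_above_path_lift_iff])
  then show ?thesis using col_above_path_lift_last[OF C'] by (simp add: cols_above_path_def)
qed

lemma in_Y_shrink: "in_Y (k - d) lam' (i, j) \<longleftrightarrow> j < M \<and> in_Y k lam (row_skip a d i, j)"
proof (cases "i \<le> a")
  case True
  then have "1 \<le> i \<Longrightarrow> lam i = M" using top_rows split by auto
  then show ?thesis
    using True split h_le M_pos by (auto simp: in_Y_iff shrink_shape_def row_skip_def)
next
  case False
  then have "i \<le> k - d \<Longrightarrow> lam (i + d) < M" using lower_rows split by auto
  then show ?thesis using False by (auto simp: in_Y_iff shrink_shape_def row_skip_def)
qed

lemma row_skip_cases: "row_skip a d i \<le> a \<or> h < row_skip a d i"
  using split by (auto simp: row_skip_def)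

lemma row_skip_unskip: "i \<le> a \<or> h < i \<Longrightarrow> row_skip a d (row_unskip a d i) = i"
  using split by (auto simp: row_skip_def row_unskip_def)

lemma row_unskip_skip: "row_unskip a d (row_skip a d i) = i"
  by (auto simp: row_skip_def row_unskip_def)

lemma row_unskip_range: "i \<in> {1..k} \<Longrightarrow> i \<le> a \<or> h < i \<Longrightarrow> row_unskip a d i \<in> {1..k - d}"
  using split h_le by (auto simp: row_unskip_def)

lemma row_skip_range: "i \<in> {1..k - d} \<Longrightarrow> row_skip a d i \<in> {1..k}"
  by (auto simp: row_skip_def)

lemma in_Y_shrink_unskip:
  "i \<le> a \<or> h < i \<Longrightarrow> in_Y (k - d) lam' (row_unskip a d i, j) \<longleftrightarrow> j < M \<and> in_Y k lam (i, j)"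
  using in_Y_shrink[of "row_unskip a d i" j] row_skip_unskip[of i] by (simp only:)

context
  fixes T :: "nat \<times> nat \<Rightarrow> cell" and n :: nat
  assumes T: "T \<in> catalan_tableaux n k lam" and cut: "tab_cut h M T = a"
begin

lemma last_col_beta_iff:
  assumes "i \<in> {1..h}"
  shows "T (i, M) = Beta \<longleftrightarrow> a < i"
proof -
  have "i \<in> {i\<in>{1..h}. T (i, M) \<noteq> Beta} \<longleftrightarrow> i \<in> {1..a}"
    using tab_cut_rows(1)[OF T] cut by simp
  then show ?thesis using assms by auto
qed

lemma last_col_alpha: "1 \<le> a \<Longrightarrow> T (a, M) = Alpha"
proof -
  assume a: "1 \<le> a"
  then have Y: "in_Y k lam (a, M)" using in_Y_last_col split by auto
  have "T (a, M) \<noteq> Emp"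
  proof (rule tableau_fill[OF T Y])
    show "T (i', M) \<noteq> Alpha" if "a < i'" "in_Y k lam (i', M)" for i'
      using last_col_beta_iff[of i'] that in_Y_last_col by auto
    show "T (a, j') \<noteq> Beta" if "M < j'" "in_Y k lam (a, j')" for j'
      using in_Y_le_M that by fastforce
  qed
  then show ?thesis using last_col_beta_iff[of a] a split by (auto intro: cell_cases)
qed

lemma last_col_empty: "1 \<le> i \<Longrightarrow> i < a \<Longrightarrow> T (i, M) = Emp"
  using tableau_col[OF T _ last_col_alpha] in_Y_last_col split by auto

lemma beta_rows_empty: "a < i \<Longrightarrow> i \<le> h \<Longrightarrow> 1 \<le> j \<Longrightarrow> j < M \<Longrightarrow> T (i, j) = Emp"
  using tableau_row[OF T, of i M j] last_col_beta_iff[of i] in_Y_last_col[of i] top_rows h_le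
  by (auto simp: in_Y_iff)

lemma tab_drop_fill:
  assumes Y: "in_Y (k - d) lam' (i, j)"
    and no_alpha: "\<And>i'. i < i' \<Longrightarrow> in_Y (k - d) lam' (i', j) \<Longrightarrow> tab_drop M a d T (i', j) \<noteq> Alpha"
    and no_beta: "\<And>j'. j < j' \<Longrightarrow> in_Y (k - d) lam' (i, j') \<Longrightarrow> tab_drop M a d T (i, j') \<noteq> Beta"
  shows "tab_drop M a d T (i, j) \<noteq> Emp"
proof -
  have j: "j < M" and Y0: "in_Y k lam (row_skip a d i, j)" using Y in_Y_shrink by auto
  have "T (row_skip a d i, j) \<noteq> Emp"
  proof (rule tableau_fill[OF T Y0])
    fix i'' assume i'': "row_skip a d i < i''" "in_Y k lam (i'', j)"
    show "T (i'', j) \<noteq> Alpha"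
    proof (cases "a < i'' \<and> i'' \<le> h")
      case True
      then show ?thesis using beta_rows_empty[of i'' j] i'' j by (auto simp: in_Y_iff)
    next
      case False
      then have kept: "row_skip a d (row_unskip a d i'') = i''" using row_skip_unskip by auto
      then have "i < row_unskip a d i''" using i''(1) row_skip_less_iff by metis
      moreover have "in_Y (k - d) lam' (row_unskip a d i'', j)"
        using in_Y_shrink kept j i''(2) by simp
      ultimately show ?thesis using no_alpha kept j by (fastforce simp: tab_drop.simps)
    qed
  next
    fix j' assume j': "j < j'" "in_Y k lam (row_skip a d i, j')"
    show "T (row_skip a d i, j') \<noteq> Beta"
    proof (cases "j' < M")
      case True
      then show ?thesis using no_beta[of j'] j' in_Y_shrink by (simp add: tab_drop.simps)
    next
      case False
      then have "j' = M" using in_Y_le_M j'(2) by fastforce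
      moreover have "row_skip a d i \<in> {1..h}" using in_Y_last_col j'(2) \<open>j' = M\<close> by simp
      ultimately show ?thesis using last_col_beta_iff row_skip_cases[of i] by fastforce
    qed
  qed
  then show ?thesis using j by (simp add: tab_drop.simps)
qed

lemma tab_drop_in: "tab_drop M a d T \<in> catalan_tableaux n (k - d) lam'"
proof (rule catalan_tableauxI)
  show "tab_drop M a d T b = Emp" if "\<not> in_Y (k - d) lam' b" for b
    using that tableau_outside[OF T] in_Y_shrink by (cases b) (auto simp: tab_drop.simps)
  show "tab_drop M a d T (i', j) = Emp"
    if "in_Y (k - d) lam' (i, j)" "tab_drop M a d T (i, j) = Alpha" "in_Y (k - d) lam' (i', j)"
      "i' < i"
    for i j i'
    using that tableau_col[OF T, of "row_skip a d i" j "row_skip a d i'"]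
      row_skip_less_iff[of a d i' i]
    by (auto simp: tab_drop.simps in_Y_shrink)
  show "tab_drop M a d T (i, j') = Emp"
    if "in_Y (k - d) lam' (i, j)" "tab_drop M a d T (i, j) = Beta" "in_Y (k - d) lam' (i, j')"
      "j' < j"
    for i j j'
    using that tableau_row[OF T, of "row_skip a d i" j j']
    by (auto simp: tab_drop.simps in_Y_shrink)
qed (rule tab_drop_fill)

lemma tab_lift_drop: "tab_lift k lam M h a d (tab_drop M a d T) = T"
proof
  fix p :: "nat \<times> nat"
  obtain i j where p: "p = (i, j)" by force
  show "tab_lift k lam M h a d (tab_drop M a d T) p = T p"
  proof (cases "in_Y k lam (i, j)")
    case False
    then show ?thesis using tableau_outside[OF T] p by (simp add: tab_lift.simps)
  next
    case Y: True
    then have j: "j \<le> M" "1 \<le> i" "1 \<le> j" using in_Y_le_M by (auto simp: in_Y_iff)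
    consider "j = M" | "j < M" "a < i \<and> i \<le> h" | "j < M" "i \<le> a \<or> h < i" using j by linarith
    then show ?thesis
    proof cases
      case 1
      then have "i \<le> h" using Y in_Y_last_col by simp
      then show ?thesis using last_col_empty last_col_alpha last_col_beta_iff[of i] j Y 1 p
        by (auto simp: tab_lift.simps)
    next
      case 2
      then show ?thesis using beta_rows_empty j Y p by (simp add: tab_lift.simps)
    next
      case 3
      then show ?thesis using row_skip_unskip Y p by (auto simp: tab_lift.simps tab_drop.simps)
    qed
  qed
qed

end

context
  fixes T' :: "nat \<times> nat \<Rightarrow> cell" and n :: nat
  assumes T': "T' \<in> catalan_tableaux n (k - d) lam'"
begin

lemma tab_lift_last_col:
  "in_Y k lam (i, M) \<Longrightarrow>
    tab_lift k lam M h a d T' (i, M) = (if i < a then Emp else if i = a then Alpha else Beta)"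
  and tab_lift_beta_rows:
  "in_Y k lam (i, j) \<Longrightarrow> j \<noteq> M \<Longrightarrow> a < i \<Longrightarrow> i \<le> h \<Longrightarrow> tab_lift k lam M h a d T' (i, j) = Emp"
  and tab_lift_kept_rows:
  "in_Y k lam (i, j) \<Longrightarrow> j \<noteq> M \<Longrightarrow> i \<le> a \<or> h < i \<Longrightarrow>
    tab_lift k lam M h a d T' (i, j) = T' (row_unskip a d i, j)"
  and tab_lift_nonempty: "tab_lift k lam M h a d T' (i, j) \<noteq> Emp \<Longrightarrow> in_Y k lam (i, j)"
  by (auto simp: tab_lift.simps split: if_splits)

lemma tab_lift_nonempty_kept:
  "in_Y k lam (i, j) \<Longrightarrow> j \<noteq> M \<Longrightarrow> tab_lift k lam M h a d T' (i, j) \<noteq> Emp \<Longrightarrow> i \<le> a \<or> h < i"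
  using tab_lift_beta_rows by fastforce

lemma shrunk_nonempty: "T' (i, j) \<noteq> Emp \<Longrightarrow> j < M \<and> in_Y k lam (row_skip a d i, j)"
  using tableau_outside[OF T', of "(i, j)"] in_Y_shrink by blast

lemma tab_lift_row_skip:
  "j < M \<Longrightarrow> in_Y k lam (row_skip a d i, j) \<Longrightarrow>
    tab_lift k lam M h a d T' (row_skip a d i, j) = T' (i, j)"
  using tab_lift_kept_rows[of "row_skip a d i" j] row_skip_cases[of i] row_unskip_skip by simp

lemma tab_drop_lift: "tab_drop M a d (tab_lift k lam M h a d T') = T'"
proof
  fix p :: "nat \<times> nat"
  obtain i j where p: "p = (i, j)" by force
  show "tab_drop M a d (tab_lift k lam M h a d T') p = T' p"
  proof (cases "j < M \<and> in_Y k lam (row_skip a d i, j)")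
    case True
    then show ?thesis using tab_lift_row_skip p by (simp add: tab_drop.simps)
  next
    case False
    then have "T' (i, j) = Emp" using shrunk_nonempty by blast
    then show ?thesis using False p by (auto simp: tab_drop.simps tab_lift.simps)
  qed
qed

lemma tab_lift_col_rule:
  assumes Y: "in_Y k lam (i, j)" and A: "tab_lift k lam M h a d T' (i, j) = Alpha"
    and Y': "in_Y k lam (i', j)" and less: "i' < i"
  shows "tab_lift k lam M h a d T' (i', j) = Emp"
proof (cases "j = M")
  case True
  then have "i = a" using A tab_lift_last_col[of i] Y by (simp split: if_splits)
  then show ?thesis using Y' True less tab_lift_last_col by simp
next
  case False
  have kept: "i \<le> a \<or> h < i" by (rule tab_lift_nonempty_kept[OF Y False]) (simp add: A)
  show ?thesis
  proof (cases "i' \<le> a \<or> h < i'")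
    case False
    then show ?thesis using tab_lift_beta_rows[OF Y' \<open>j \<noteq> M\<close>] by simp
  next
    case kept': True
    have "j < M" using False in_Y_le_M[OF Y] by simp
    then have "in_Y (k - d) lam' (row_unskip a d i, j)" "in_Y (k - d) lam' (row_unskip a d i', j)"
      using in_Y_shrink_unskip kept kept' Y Y' by auto
    moreover have "row_unskip a d i' < row_unskip a d i"
      using row_skip_less_iff[of a d "row_unskip a d i'" "row_unskip a d i"] row_skip_unskip
        kept kept' less
      by simp
    moreover have "T' (row_unskip a d i, j) = Alpha"
      using A tab_lift_kept_rows[OF Y False kept] by simp
    ultimately have "T' (row_unskip a d i', j) = Emp" using tableau_col[OF T'] by blast
    then show ?thesis using tab_lift_kept_rows[OF Y' False kept'] by simp
  qed
qed

lemma tab_lift_row_rule: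
  assumes Y: "in_Y k lam (i, j)" and B: "tab_lift k lam M h a d T' (i, j) = Beta"
    and Y': "in_Y k lam (i, j')" and less: "j' < j"
  shows "tab_lift k lam M h a d T' (i, j') = Emp"
proof (cases "j = M")
  case True
  then have "a < i" "i \<le> h"
    using B tab_lift_last_col[of i] Y in_Y_last_col by (auto split: if_splits)
  then show ?thesis using tab_lift_beta_rows[OF Y'] less True by simp
next
  case False
  have kept: "i \<le> a \<or> h < i" by (rule tab_lift_nonempty_kept[OF Y False]) (simp add: B)
  have "j < M" using False in_Y_le_M[OF Y] by simp
  then have "in_Y (k - d) lam' (row_unskip a d i, j)" "in_Y (k - d) lam' (row_unskip a d i, j')"
    using in_Y_shrink_unskip kept Y Y' less by auto
  moreover have "T' (row_unskip a d i, j) = Beta"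
    using B tab_lift_kept_rows[OF Y False kept] by simp
  ultimately have "T' (row_unskip a d i, j') = Emp" using tableau_row[OF T'] less by blast
  then show ?thesis using tab_lift_kept_rows[OF Y' _ kept] less \<open>j < M\<close> by simp
qed

lemma tab_lift_fill_rule:
  assumes Y: "in_Y k lam (i, j)"
    and no_alpha: "\<And>i'. i < i' \<Longrightarrow> in_Y k lam (i', j) \<Longrightarrow> tab_lift k lam M h a d T' (i', j) \<noteq> Alpha"
    and no_beta: "\<And>j'. j < j' \<Longrightarrow> in_Y k lam (i, j') \<Longrightarrow> tab_lift k lam M h a d T' (i, j') \<noteq> Beta"
  shows "tab_lift k lam M h a d T' (i, j) \<noteq> Emp"
proof (cases "j = M")
  case True
  have "\<not> i < a"
  proof
    assume less: "i < a"
    have "1 \<le> i" "i \<le> h" using Y True in_Y_last_col[of i] by auto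
    then have Ya: "in_Y k lam (a, M)" using less split in_Y_last_col[of a] by auto
    then show False using no_alpha[OF less] tab_lift_last_col[OF Ya] True by simp
  qed
  then show ?thesis using tab_lift_last_col[of i] Y True by simp
next
  case False
  have j: "j < M" using False in_Y_le_M[OF Y] by simp
  show ?thesis
  proof (cases "i \<le> a \<or> h < i")
    case False
    then have Yi: "in_Y k lam (i, M)" using in_Y_last_col[of i] Y by (auto simp: in_Y_iff)
    then have "tab_lift k lam M h a d T' (i, M) = Beta" using tab_lift_last_col[OF Yi] False by auto
    then show ?thesis using no_beta[OF j Yi] by simp
  next
    case kept: True
    have Y': "in_Y (k - d) lam' (row_unskip a d i, j)" using in_Y_shrink_unskip kept j Y by simp
    have "T' (row_unskip a d i, j) \<noteq> Emp"
    proof (rule tableau_fill[OF T' Y'])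
      fix i'' assume i'': "row_unskip a d i < i''" "in_Y (k - d) lam' (i'', j)"
      have "i < row_skip a d i''"
        using row_skip_less_iff[of a d "row_unskip a d i" i''] row_skip_unskip[OF kept] i''(1)
        by simp
      moreover have Y'': "in_Y k lam (row_skip a d i'', j)" using in_Y_shrink i''(2) by simp
      ultimately have "tab_lift k lam M h a d T' (row_skip a d i'', j) \<noteq> Alpha"
        using no_alpha by blast
      then show "T' (i'', j) \<noteq> Alpha" using tab_lift_row_skip[OF j Y''] by simp
    next
      fix j'' assume j'': "j < j''" "in_Y (k - d) lam' (row_unskip a d i, j'')"
      then have "j'' < M" "in_Y k lam (i, j'')" using in_Y_shrink_unskip[OF kept] by auto
      then show "T' (row_unskip a d i, j'') \<noteq> Beta"
        using no_beta[OF j''(1)] tab_lift_kept_rows[OF _ _ kept, of j''] by auto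
    qed
    then show ?thesis using tab_lift_kept_rows[OF Y False kept] by simp
  qed
qed

lemma tab_lift_in: "tab_lift k lam M h a d T' \<in> catalan_tableaux n k lam"
proof (rule catalan_tableauxI)
  show "tab_lift k lam M h a d T' b = Emp" if "\<not> in_Y k lam b" for b
    using that by (cases b) (simp add: tab_lift.simps)
qed (fact tab_lift_col_rule tab_lift_row_rule tab_lift_fill_rule)+

lemma tab_cut_lift: "tab_cut h M (tab_lift k lam M h a d T') = a"
proof -
  have "tab_lift k lam M h a d T' (i, M) \<noteq> Beta \<longleftrightarrow> i \<le> a" if "i \<in> {1..h}" for i
    using tab_lift_last_col[of i] in_Y_last_col[of i] that by auto
  moreover have "a \<le> h" using split by simp
  ultimately have "{i\<in>{1..h}. tab_lift k lam M h a d T' (i, M) \<noteq> Beta} = {1..a}"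
    by (intro equalityI subsetI) auto
  then show ?thesis by (simp add: tab_cut_def)
qed

lemma beta_free_row_lift_iff:
  "beta_free_row m (tab_lift k lam M h a d T') (row_skip a d i) \<longleftrightarrow> beta_free_row (m - 1) T' i"
proof -
  have "(\<exists>j\<in>{1..m}. tab_lift k lam M h a d T' (row_skip a d i, j) = Beta) \<longleftrightarrow>
    (\<exists>j\<in>{1..m - 1}. T' (i, j) = Beta)"
  proof
    assume "\<exists>j\<in>{1..m}. tab_lift k lam M h a d T' (row_skip a d i, j) = Beta"
    then obtain j where j: "j \<in> {1..m}" "tab_lift k lam M h a d T' (row_skip a d i, j) = Beta"
      by blast
    have Y: "in_Y k lam (row_skip a d i, j)" using tab_lift_nonempty j(2) by simp
    have "j \<noteq> M"
    proof
      assume "j = M"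
      then have "row_skip a d i \<in> {1..h}" using Y in_Y_last_col by simp
      then have "row_skip a d i \<le> a" using row_skip_cases[of i] by auto
      then show False using j(2) \<open>j = M\<close> tab_lift_last_col[of "row_skip a d i"] Y
        by (auto split: if_splits)
    qed
    then have "j < M" using in_Y_le_M[OF Y] by simp
    then have "T' (i, j) = Beta" "j \<in> {1..m - 1}" using tab_lift_row_skip Y j M_le by auto
    then show "\<exists>j\<in>{1..m - 1}. T' (i, j) = Beta" by blast
  next
    assume "\<exists>j\<in>{1..m - 1}. T' (i, j) = Beta"
    then obtain j where j: "j \<in> {1..m - 1}" "T' (i, j) = Beta" by blast
    then have "j < M \<and> in_Y k lam (row_skip a d i, j)" using shrunk_nonempty[of i j] by simp
    then have "tab_lift k lam M h a d T' (row_skip a d i, j) = Beta"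
      using tab_lift_row_skip j by simp
    moreover have "j \<in> {1..m}" using j by auto
    ultimately show "\<exists>j\<in>{1..m}. tab_lift k lam M h a d T' (row_skip a d i, j) = Beta" by blast
  qed
  then show ?thesis by (simp add: beta_free_row_def)
qed

lemma beta_free_rows_lift:
  "beta_free_rows k m (tab_lift k lam M h a d T') = beta_free_rows (k - d) (m - 1) T'"
proof -
  let ?R = "{i\<in>{1..k}. beta_free_row m (tab_lift k lam M h a d T') i}"
  let ?R' = "{i\<in>{1..k - d}. beta_free_row (m - 1) T' i}"
  have "?R = row_skip a d ` ?R'"
  proof (intro equalityI subsetI)
    fix i assume i: "i \<in> ?R"
    have kept: "i \<le> a \<or> h < i"
    proof (rule ccontr)
      assume "\<not> (i \<le> a \<or> h < i)"
      then have "tab_lift k lam M h a d T' (i, M) = Beta"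
        using tab_lift_last_col[of i] in_Y_last_col[of i] by auto
      then show False using i M_pos M_le by (auto simp: beta_free_row_def)
    qed
    then have "row_unskip a d i \<in> ?R'"
      using row_unskip_range beta_free_row_lift_iff[of "row_unskip a d i"] row_skip_unskip i by auto
    then show "i \<in> row_skip a d ` ?R'" using row_skip_unskip[OF kept] by force
  next
    fix i assume "i \<in> row_skip a d ` ?R'"
    then show "i \<in> ?R" using row_skip_range beta_free_row_lift_iff by auto
  qed
  moreover have "inj_on (row_skip a d) ?R'"
    by (rule inj_on_inverseI[where g = "row_unskip a d"]) (rule row_unskip_skip)
  ultimately show ?thesis by (simp add: beta_free_rows_def card_image)
qed

lemma alpha_free_col_lift_iff:
  assumes "j < M"
  shows "alpha_free_col k (tab_lift k lam M h a d T') j \<longleftrightarrow> alpha_free_col (k - d) T' j"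
proof -
  have "(\<exists>i\<in>{1..k}. tab_lift k lam M h a d T' (i, j) = Alpha) \<longleftrightarrow> (\<exists>i\<in>{1..k - d}. T' (i, j) = Alpha)"
  proof
    assume "\<exists>i\<in>{1..k}. tab_lift k lam M h a d T' (i, j) = Alpha"
    then obtain i where i: "i \<in> {1..k}" "tab_lift k lam M h a d T' (i, j) = Alpha" by blast
    have Y: "in_Y k lam (i, j)" and j: "j \<noteq> M" using tab_lift_nonempty i(2) assms by auto
    have kept: "i \<le> a \<or> h < i" using tab_lift_nonempty_kept[OF Y j] i(2) by simp
    have "T' (row_unskip a d i, j) = Alpha" using tab_lift_kept_rows[OF Y j kept] i by simp
    moreover have "row_unskip a d i \<in> {1..k - d}" using row_unskip_range kept i by simp
    ultimately show "\<exists>i\<in>{1..k - d}. T' (i, j) = Alpha" by blast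
  next
    assume "\<exists>i\<in>{1..k - d}. T' (i, j) = Alpha"
    then obtain i where i: "i \<in> {1..k - d}" "T' (i, j) = Alpha" by blast
    then have "j < M \<and> in_Y k lam (row_skip a d i, j)" using shrunk_nonempty[of i j] by simp
    then have "tab_lift k lam M h a d T' (row_skip a d i, j) = Alpha"
      using tab_lift_row_skip i by simp
    moreover have "row_skip a d i \<in> {1..k}" using row_skip_range i by simp
    ultimately show "\<exists>i\<in>{1..k}. tab_lift k lam M h a d T' (i, j) = Alpha" by blast
  qed
  then show ?thesis by (simp add: alpha_free_col_def)
qed

lemma alpha_free_col_lift_last: "alpha_free_col k (tab_lift k lam M h a d T') M \<longleftrightarrow> a = 0"
proof
  assume M_free: "alpha_free_col k (tab_lift k lam M h a d T') M"
  show "a = 0"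
  proof (rule ccontr)
    assume "a \<noteq> 0"
    then have Y: "in_Y k lam (a, M)" using in_Y_last_col split by auto
    then have "a \<in> {1..k}" by (simp add: in_Y_iff)
    then show False using M_free tab_lift_last_col[OF Y] by (auto simp: alpha_free_col_def)
  qed
next
  assume "a = 0"
  then have "tab_lift k lam M h a d T' (i, M) \<noteq> Alpha" if "i \<in> {1..k}" for i
    using that tab_lift_last_col[of i] tab_lift_nonempty[of i M] by fastforce
  then show "alpha_free_col k (tab_lift k lam M h a d T') M" by (simp add: alpha_free_col_def)
qed

lemma alpha_free_cols_lift:
  "alpha_free_cols k m (tab_lift k lam M h a d T')
    = alpha_free_cols (k - d) (m - 1) T' + (if a = 0 then 1 else 0)"
proof -
  have above: "alpha_free_col k (tab_lift k lam M h a d T') j" if "M < j" for j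
  proof -
    have "\<not> in_Y k lam (i, j)" for i using in_Y_le_M[of i j] that by (meson not_le)
    then show ?thesis unfolding alpha_free_col_def by (metis cell.distinct(1) tab_lift_nonempty)
  qed
  have above': "alpha_free_col (k - d) T' j" if "M \<le> j" for j
    unfolding alpha_free_col_def using shrunk_nonempty that by (metis cell.distinct(1) not_le)
  have "card {j\<in>{1..m}. alpha_free_col k (tab_lift k lam M h a d T') j}
      = card {j\<in>{1..m - 1}. alpha_free_col (k - d) T' j}
        + (if alpha_free_col k (tab_lift k lam M h a d T') M then 1 else 0)"
    by (rule card_cols_delete[OF M_pos M_le above above' alpha_free_col_lift_iff])
  then show ?thesis using alpha_free_col_lift_last by (simp add: alpha_free_cols_def)
qed

end

lemma bij_betw_tab_lift:
  "bij_betw (tab_lift k lam M h a d) (catalan_tableaux n (k - d) lam')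
     {T\<in>catalan_tableaux n k lam. tab_cut h M T = a}"
  by (rule bij_betw_byWitness[where f' = "tab_drop M a d"])
    (use tab_drop_lift tab_lift_drop tab_lift_in tab_cut_lift tab_drop_in in auto)

lemma count_preserving_bij_lift:
  assumes F: "count_preserving_bij (k - d) (m - 1) lam' F
    (catalan_paths n (k - d) lam') (catalan_tableaux n (k - d) lam')"
  shows "count_preserving_bij k m lam (tab_lift k lam M h a d \<circ> F \<circ> path_drop k d)
    {C\<in>catalan_paths n k lam. path_cut h M C = a} {T\<in>catalan_tableaux n k lam. tab_cut h M T = a}"
proof -
  have bij: "bij_betw F (catalan_paths n (k - d) lam') (catalan_tableaux n (k - d) lam')"
    using F by (simp add: count_preserving_bij_def)
  have "path_south_border k C = beta_free_rows k m (tab_lift k lam M h a d (F (path_drop k d C)))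
      \<and> cols_above_path k m lam C
        = alpha_free_cols k m (tab_lift k lam M h a d (F (path_drop k d C)))"
    if C: "C \<in> catalan_paths n k lam" "path_cut h M C = a" for C
  proof -
    define C' where "C' = path_drop k d C"
    have C': "C' \<in> catalan_paths n (k - d) lam'" using path_drop_in[OF C] by (simp add: C'_def)
    have C_eq: "C = path_lift k M d C'" using path_lift_drop[OF C] by (simp add: C'_def)
    have FC': "F C' \<in> catalan_tableaux n (k - d) lam'" using bij C' by (simp add: bij_betw_apply)
    have "path_south_border (k - d) C' = beta_free_rows (k - d) (m - 1) (F C')"
      "cols_above_path (k - d) (m - 1) lam' C' = alpha_free_cols (k - d) (m - 1) (F C')"
      using F C' by (auto simp: count_preserving_bij_def)
    then show ?thesis
      unfolding C_eq path_drop_lift[OF C']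
      using south_border_path_lift[OF C'] cols_above_path_lift[OF C']
        beta_free_rows_lift[OF FC'] alpha_free_cols_lift[OF FC']
      by simp
  qed
  moreover have "bij_betw (tab_lift k lam M h a d \<circ> (F \<circ> path_drop k d))
      {C\<in>catalan_paths n k lam. path_cut h M C = a} {T\<in>catalan_tableaux n k lam. tab_cut h M T = a}"
    by (rule bij_betw_trans[OF bij_betw_trans[OF bij_betw_path_drop bij] bij_betw_tab_lift])
  ultimately show ?thesis by (simp add: count_preserving_bij_def comp_assoc)
qed

end

section \<open>The bijection\<close>

context top_block
begin

lemma count_preserving_bij_glue:
  assumes "\<And>a. a \<le> h \<Longrightarrow> \<exists>F. count_preserving_bij (k - (h - a)) (m - 1)
    (shrink_shape M a (h - a) lam) F (catalan_paths n (k - (h - a)) (shrink_shape M a (h - a) lam))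
    (catalan_tableaux n (k - (h - a)) (shrink_shape M a (h - a) lam))"
  shows "\<exists>f. count_preserving_bij k m lam f (catalan_paths n k lam) (catalan_tableaux n k lam)"
proof -
  obtain F where F: "\<And>a. a \<le> h \<Longrightarrow> count_preserving_bij (k - (h - a)) (m - 1)
    (shrink_shape M a (h - a) lam) (F a)
    (catalan_paths n (k - (h - a)) (shrink_shape M a (h - a) lam))
    (catalan_tableaux n (k - (h - a)) (shrink_shape M a (h - a) lam))"
    using assms by metis
  define g where "g a = tab_lift k lam M h a (h - a) \<circ> F a \<circ> path_drop k (h - a)" for a
  have fiber: "count_preserving_bij k m lam (g a)
      {C\<in>catalan_paths n k lam. path_cut h M C = a} {T\<in>catalan_tableaux n k lam. tab_cut h M T = a}"
    if "a \<in> {0..h}" for a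
  proof -
    interpret top_block_split k m M h lam a "h - a" using that by unfold_locales simp
    show ?thesis unfolding g_def by (rule count_preserving_bij_lift) (use F that in simp)
  qed
  have "bij_betw (\<lambda>C. g (path_cut h M C) C) (catalan_paths n k lam) (catalan_tableaux n k lam)"
  proof (rule bij_betw_fiberwise)
    show "\<forall>C\<in>catalan_paths n k lam. path_cut h M C \<in> {0..h}" using path_cut_rows(2) by simp
    show "\<forall>T\<in>catalan_tableaux n k lam. tab_cut h M T \<in> {0..h}" using tab_cut_rows(2) by simp
    show "\<forall>a\<in>{0..h}. bij_betw (g a) {C\<in>catalan_paths n k lam. path_cut h M C = a}
        {T\<in>catalan_tableaux n k lam. tab_cut h M T = a}"
      using fiber by (simp add: count_preserving_bij_def)
  qed
  moreover have "path_south_border k C = beta_free_rows k m (g (path_cut h M C) C) \<and>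
      cols_above_path k m lam C = alpha_free_cols k m (g (path_cut h M C) C)"
    if C: "C \<in> catalan_paths n k lam" for C
    using fiber[of "path_cut h M C"] path_cut_rows(2)[OF C] C
    by (simp add: count_preserving_bij_def)
  ultimately show ?thesis unfolding count_preserving_bij_def by blast
qed

end

lemma count_preserving_bij_empty_shape:
  assumes zero: "\<forall>i\<in>{1..k}. lam i = 0"
  shows "\<exists>f. count_preserving_bij k m lam f (catalan_paths n k lam) (catalan_tableaux n k lam)"
proof -
  have paths: "catalan_paths n k lam = {\<lambda>_. 0}"
  proof (intro equalityI subsetI)
    fix C assume C: "C \<in> catalan_paths n k lam"
    have "C i = 0" for i
      using catalan_paths_le[OF C, of i] catalan_paths_outside[OF C, of i] zero
      by (cases "i \<in> {1..k}") auto
    then show "C \<in> {\<lambda>_. 0}" by auto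
  qed (auto simp: catalan_paths_def)
  have not_in_Y: "\<not> in_Y k lam b" for b using zero by (auto simp: in_Y_def)
  have tableaux: "catalan_tableaux n k lam = {\<lambda>_. Emp}"
  proof (intro equalityI subsetI)
    fix T assume "T \<in> catalan_tableaux n k lam"
    then have "T b = Emp" for b using tableau_outside not_in_Y by blast
    then show "T \<in> {\<lambda>_. Emp}" by auto
  qed (auto simp: catalan_tableaux_def not_in_Y)
  have "path_south_border k (\<lambda>_. 0) = card {1..k}" "beta_free_rows k m (\<lambda>_. Emp) = card {1..k}"
    "cols_above_path k m lam (\<lambda>_. 0) = card {1..m}" "alpha_free_cols k m (\<lambda>_. Emp) = card {1..m}"
    unfolding path_south_border_def beta_free_rows_def beta_free_row_def cols_above_path_def
      col_above_path_def alpha_free_cols_def alpha_free_col_def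
    by (rule arg_cong[where f = card]; auto simp: zero)+
  then have "count_preserving_bij k m lam (\<lambda>_. \<lambda>_. Emp)
      (catalan_paths n k lam) (catalan_tableaux n k lam)"
    by (simp add: count_preserving_bij_def paths tableaux bij_betw_def)
  then show ?thesis by blast
qed

lemma top_block_exists:
  assumes shape: "shape_in k m lam" and i0: "i0 \<in> {1..k}" "lam i0 \<noteq> 0"
  shows "\<exists>h. top_block k m (lam 1) h lam"
proof -
  have dec: "\<forall>i\<in>{1..<k}. lam (Suc i) \<le> lam i" and bound: "\<forall>i\<in>{1..k}. lam i \<le> m"
    using shape by (auto simp: shape_in_def)
  define H where "H = {i\<in>{1..k}. lam i = lam 1}"
  define h where "h = Max H"
  have "finite H" "1 \<in> H" using i0 by (auto simp: H_def)
  then have h: "h \<in> H" "\<forall>i\<in>H. i \<le> h" unfolding h_def using Max_in Max_ge by blast+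
  have "top_block k m (lam 1) h lam"
  proof
    show "\<forall>i\<in>{1..<k}. lam (Suc i) \<le> lam i" by (rule dec)
    show "1 \<le> lam 1" using antitone_rows[OF dec, of 1 i0] i0 by simp
    show "lam 1 \<le> m" using bound i0 by auto
    show "h \<le> k" using h by (simp add: H_def)
    show "\<forall>i\<in>{1..h}. lam i = lam 1"
      using antitone_rows[OF dec, of _ h] antitone_rows[OF dec, of 1] h by (fastforce simp: H_def)
    show "\<forall>i. h < i \<and> i \<le> k \<longrightarrow> lam i < lam 1"
    proof (intro allI impI)
      fix i assume i: "h < i \<and> i \<le> k"
      then have "lam i \<le> lam 1" "i \<notin> H" using antitone_rows[OF dec, of 1 i] h by auto
      then show "lam i < lam 1" using i by (auto simp: H_def)
    qed
  qed
  then show ?thesis by blast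
qed

lemma catalan_count_preserving_bij:
  assumes "shape_in k m lam"
  shows "\<exists>f. count_preserving_bij k m lam f (catalan_paths n k lam) (catalan_tableaux n k lam)"
  using assms
proof (induction m arbitrary: k lam)
  case 0
  then show ?case by (intro count_preserving_bij_empty_shape) (auto simp: shape_in_def)
next
  case (Suc m)
  show ?case
  proof (cases "\<forall>i\<in>{1..k}. lam i = 0")
    case True
    then show ?thesis by (rule count_preserving_bij_empty_shape)
  next
    case False
    then obtain h where "top_block k (Suc m) (lam 1) h lam"
      using top_block_exists[OF Suc.prems] by blast
    then interpret top_block k "Suc m" "lam 1" h lam .
    show ?thesis
    proof (rule count_preserving_bij_glue)
      fix a assume "a \<le> h"
      then interpret top_block_split k "Suc m" "lam 1" h lam a "h - a" by unfold_locales simp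
      show "\<exists>F. count_preserving_bij (k - (h - a)) (Suc m - 1)
        (shrink_shape (lam 1) a (h - a) lam) F
        (catalan_paths n (k - (h - a)) (shrink_shape (lam 1) a (h - a) lam))
        (catalan_tableaux n (k - (h - a)) (shrink_shape (lam 1) a (h - a) lam))"
        using Suc.IH shape_in_shrink by simp
    qed
  qed
qed

theorem lemma1:
  fixes n k :: nat and lam :: "nat \<Rightarrow> nat"
  assumes "1 \<le> k" and "k \<le> n" and "young_shape n k lam"
  shows "\<exists>f. bij_betw f (catalan_paths n k lam) (catalan_tableaux n k lam) \<and>
           (\<forall>C\<in>catalan_paths n k lam. \<forall>\<alpha> \<beta> :: real. \<alpha> \<noteq> 0 \<longrightarrow> \<beta> \<noteq> 0 \<longrightarrow>
              path_wt n k lam \<alpha> \<beta> C = tab_wt n k \<alpha> \<beta> (f C))"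
proof -
  have shape: "shape_in k (n - k) lam" using assms(3) by (simp add: shape_in_def young_shape_def)
  obtain f where
    f: "count_preserving_bij k (n - k) lam f (catalan_paths n k lam) (catalan_tableaux n k lam)"
    using catalan_count_preserving_bij[OF shape] by blast
  have "path_wt n k lam \<alpha> \<beta> C = tab_wt n k \<alpha> \<beta> (f C)" if C: "C \<in> catalan_paths n k lam" for C \<alpha> \<beta>
  proof -
    have "path_west_on_L n k lam C = f_col n k (f C)" "path_south_border k C = f_row n k (f C)"
      using f C path_west_on_L_eq_cols_above_path[OF shape C]
      by (auto simp: count_preserving_bij_def f_col_def f_row_def alpha_free_cols_def
          alpha_free_col_def beta_free_rows_def beta_free_row_def)
    then show ?thesis by (simp add: path_wt_def path_pwt_def tab_wt_def)
  qed
  then show ?thesis using f by (auto simp: count_preserving_bij_def)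
qed

end
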